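(* Let $Q$ be a finitely generated $\Lambda_R$-module and let $\mathfrak p=(g)$ be a principal prime ideal of $\Lambda_R$. Assume that $Q/\mathfrak p Q$ is a pseudo-null $\Lambda_R$-module. Let $S$ be the maximal pseudo-null $\Lambda_R$-submodule of $Q$. Then the $\mathfrak p$-torsion submodule $Q[\mathfrak p]$ of $Q$ coincides with (in particular is isomorphic to) $S[\mathfrak p]$.
   Context: Fix a prime $p$. $R$ is a complete noetherian regular local ring with maximal ideal $\mathfrak m_R$, of Krull dimension $d\ge 1$, with finite residue field of characteristic $p$. $G_\infty\simeq\mathbb Z_p$ is a pro-$p$ group with topological generator $\gamma$, $G_n=G_\infty/G_\infty^{p^n}\simeq \mathbb Z/p^n\mathbb Z$, and $\Lambda_R=R[[G_\infty]]=\varprojlim_n R[G_n]$ (isomorphic to $R[[X]]$ via $\gamma\mapsto 1+X$; it is a complete noetherian regular local ring, hence a UFD). A finitely generated $\Lambda_R$-module is pseudo-null if every prime ideal in its support has height at least $2$. For an ideal $I$ and a module $M$, $M[I]$ denotes the submodule of elements killed by $I$. *)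

theory Defs
  imports Main "HOL-Computational_Algebra.Formal_Power_Series"
begin

definition is_ideal :: "'a::comm_ring_1 set \<Rightarrow> bool" where
  "is_ideal I \<longleftrightarrow> 0 \<in> I \<and> (\<forall>a\<in>I. \<forall>b\<in>I. a + b \<in> I) \<and> (\<forall>r. \<forall>a\<in>I. r * a \<in> I)"

definition ideal_gen :: "'a::comm_ring_1 set \<Rightarrow> 'a set" where
  "ideal_gen S = \<Inter>{I. is_ideal I \<and> S \<subseteq> I}"

definition prime_ideal :: "'a::comm_ring_1 set \<Rightarrow> bool" where
  "prime_ideal P \<longleftrightarrow> is_ideal P \<and> 1 \<notin> P \<and> (\<forall>a b. a * b \<in> P \<longrightarrow> a \<in> P \<or> b \<in> P)"

definition maximal_ideal :: "'a::comm_ring_1 set \<Rightarrow> bool" where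
  "maximal_ideal M \<longleftrightarrow> is_ideal M \<and> 1 \<notin> M \<and>
     (\<forall>J. is_ideal J \<and> M \<subseteq> J \<longrightarrow> J = M \<or> 1 \<in> J)"

definition noetherian_ring :: "'a::comm_ring_1 itself \<Rightarrow> bool" where
  "noetherian_ring _ \<longleftrightarrow> (\<forall>I::'a set. is_ideal I \<longrightarrow> (\<exists>F. finite F \<and> I = ideal_gen F))"

definition height_ge :: "'a::comm_ring_1 set \<Rightarrow> nat \<Rightarrow> bool" where
  "height_ge P n \<longleftrightarrow> (\<exists>f :: nat \<Rightarrow> 'a set. (\<forall>i\<le>n. prime_ideal (f i)) \<and>
      (\<forall>i<n. f i \<subset> f (Suc i)) \<and> f n = P)"

definition krull_dim_eq :: "'a::comm_ring_1 itself \<Rightarrow> nat \<Rightarrow> bool" where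
  "krull_dim_eq _ d \<longleftrightarrow> (\<exists>P::'a set. height_ge P d) \<and> \<not> (\<exists>P::'a set. height_ge P (Suc d))"

fun ideal_pow :: "'a::comm_ring_1 set \<Rightarrow> nat \<Rightarrow> 'a set" where
  "ideal_pow M 0 = UNIV"
| "ideal_pow M (Suc n) = ideal_gen {a * b | a b. a \<in> ideal_pow M n \<and> b \<in> M}"

definition local_ring_max :: "'a::comm_ring_1 set \<Rightarrow> bool" where
  "local_ring_max M \<longleftrightarrow> maximal_ideal M \<and> (\<forall>N. maximal_ideal N \<longrightarrow> N = M)"

definition adically_complete :: "'a::comm_ring_1 set \<Rightarrow> bool" where
  "adically_complete M \<longleftrightarrow> (\<Inter>n. ideal_pow M n) = {0} \<and>
     (\<forall>x :: nat \<Rightarrow> 'a. (\<forall>n. x (Suc n) - x n \<in> ideal_pow M n) \<longrightarrow>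
        (\<exists>y. \<forall>n. y - x n \<in> ideal_pow M n))"

text \<open>Complete noetherian regular local ring of Krull dimension d with maximal ideal M,
  whose residue field is finite of characteristic p.\<close>
definition standing_R :: "'a::comm_ring_1 set \<Rightarrow> nat \<Rightarrow> nat \<Rightarrow> bool" where
  "standing_R M d p \<longleftrightarrow>
     noetherian_ring TYPE('a) \<and> local_ring_max M \<and> adically_complete M \<and>
     krull_dim_eq TYPE('a) d \<and> (\<exists>xs. length xs = d \<and> M = ideal_gen (set xs)) \<and>
     finite (range (\<lambda>x. {y. x - y \<in> M})) \<and> prime p \<and> of_nat p \<in> M"

definition fin_gen_module :: "('a::comm_ring_1 \<Rightarrow> 'b::ab_group_add \<Rightarrow> 'b) \<Rightarrow> bool" where
  "fin_gen_module s \<longleftrightarrow> module s \<and> (\<exists>F. finite F \<and> module.span s F = UNIV)"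

text \<open>Support of the quotient module N/L (L \<subseteq> N submodules): the primes P with (N/L)_P \<noteq> 0,
  i.e. some m \<in> N is not killed modulo L by any element outside P.\<close>
definition supp_quot :: "('a::comm_ring_1 \<Rightarrow> 'b::ab_group_add \<Rightarrow> 'b) \<Rightarrow> 'b set \<Rightarrow> 'b set \<Rightarrow> 'a set set" where
  "supp_quot s N L = {P. prime_ideal P \<and> (\<exists>m\<in>N. \<forall>a. a \<notin> P \<longrightarrow> s a m \<notin> L)}"

definition pseudo_null_quot :: "('a::comm_ring_1 \<Rightarrow> 'b::ab_group_add \<Rightarrow> 'b) \<Rightarrow> 'b set \<Rightarrow> 'b set \<Rightarrow> bool" where
  "pseudo_null_quot s N L \<longleftrightarrow> (\<forall>P\<in>supp_quot s N L. height_ge P 2)"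

definition pseudo_null :: "('a::comm_ring_1 \<Rightarrow> 'b::ab_group_add \<Rightarrow> 'b) \<Rightarrow> 'b set \<Rightarrow> bool" where
  "pseudo_null s N \<longleftrightarrow> pseudo_null_quot s N {0}"

definition ideal_smult :: "('a::comm_ring_1 \<Rightarrow> 'b::ab_group_add \<Rightarrow> 'b) \<Rightarrow> 'a set \<Rightarrow> 'b set \<Rightarrow> 'b set" where
  "ideal_smult s I N = module.span s {s a m | a m. a \<in> I \<and> m \<in> N}"

definition torsion_by :: "('a::comm_ring_1 \<Rightarrow> 'b::ab_group_add \<Rightarrow> 'b) \<Rightarrow> 'b set \<Rightarrow> 'a set \<Rightarrow> 'b set" where
  "torsion_by s N I = {m \<in> N. \<forall>a\<in>I. s a m = 0}"

end

theory Submission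
  imports Defs
begin

text \<open>The submodule \<open>Q[g]\<close> is supported on primes containing \<open>g\<close>. By Nakayama's lemma applied
  after localising at such a prime \<open>P\<close>, \<open>(Q/gQ)\<^sub>P = 0\<close> forces \<open>Q\<^sub>P = 0\<close>, so the support of \<open>Q[g]\<close>
  lies in that of \<open>Q/gQ\<close>. Hence \<open>Q[g]\<close> is pseudo-null and, by maximality, contained in \<open>S\<close>.\<close>

lemma ideal_gen_singleton: "ideal_gen {g::'a::comm_ring_1} = {r * g | r. True}"
proof
  have "is_ideal {r * g | r. True}"
    unfolding is_ideal_def
    by (auto, metis mult_zero_left, metis distrib_right, metis mult.assoc)
  moreover have "g \<in> {r * g | r. True}" by (auto intro: exI[of _ 1])
  ultimately show "ideal_gen {g} \<subseteq> {r * g | r. True}"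
    unfolding ideal_gen_def by blast
  show "{r * g | r. True} \<subseteq> ideal_gen {g}"
    unfolding ideal_gen_def is_ideal_def by auto
qed

lemma ideal_gen_singleton_self: "g \<in> ideal_gen {g::'a::comm_ring_1}"
  unfolding ideal_gen_def by auto

lemma prime_ideal_mult_notin:
  assumes "prime_ideal P" "a \<notin> P" "b \<notin> P" shows "a * b \<notin> P"
  using assms unfolding prime_ideal_def by blast

lemma prime_ideal_diff_notin:
  assumes "prime_ideal P" "a \<notin> P" "b \<in> P" shows "a - b \<notin> P"
  using assms unfolding prime_ideal_def is_ideal_def by (metis diff_add_cancel)

context module
begin

lemma scale_eq_zero_span:
  assumes "\<forall>f\<in>F. t *s f = 0" "x \<in> span F"
  shows "t *s x = 0"
proof -
  have "subspace {x. t *s x = 0}"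
    unfolding subspace_def
    by (auto simp: scale_right_distrib) (metis mult.commute scale_scale scale_zero_right)
  then show ?thesis using span_induct[OF assms(2), of "\<lambda>x. t *s x = 0"] assms(1) by auto
qed

lemma subspace_range_scale: "subspace (range (scale g))"
  unfolding subspace_def
proof (intro conjI ballI allI)
  show "0 \<in> range (scale g)" by (metis rangeI scale_zero_right)
  fix x y assume "x \<in> range (scale g)" "y \<in> range (scale g)"
  then show "x + y \<in> range (scale g)" by (auto simp flip: scale_right_distrib)
next
  fix c x assume "x \<in> range (scale g)"
  then obtain z where "x = g *s z" by auto
  then have "c *s x = g *s (c *s z)" by (metis scale_left_commute)
  then show "c *s x \<in> range (scale g)" by (metis rangeI)
qed

lemma ideal_smult_principal_UNIV: "ideal_smult scale (ideal_gen {g}) UNIV = range (scale g)"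
proof -
  have "{a *s m | a m. a \<in> ideal_gen {g} \<and> m \<in> UNIV} = range (scale g)"
    unfolding ideal_gen_singleton
  proof (intro equalityI subsetI)
    fix y assume "y \<in> {a *s m | a m. a \<in> {r * g | r. True} \<and> m \<in> UNIV}"
    then obtain r m where "y = (r * g) *s m" by auto
    then have "y = g *s (r *s m)" by (metis mult.commute scale_scale)
    then show "y \<in> range (scale g)" by (metis rangeI)
  next
    fix y assume "y \<in> range (scale g)"
    then have "\<exists>m. y = (1 * g) *s m" by auto
    then show "y \<in> {a *s m | a m. a \<in> {r * g | r. True} \<and> m \<in> UNIV}" by blast
  qed
  then show ?thesis unfolding ideal_smult_def using subspace_range_scale by simp
qed

lemma subspace_torsion_by: "subspace N \<Longrightarrow> subspace (torsion_by scale N I)"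
  unfolding torsion_by_def subspace_def
  by (auto simp: scale_right_distrib) (metis mult.commute scale_scale scale_zero_right)

lemma common_multiplier_into_subspace:
  assumes "finite F" "prime_ideal P" "subspace N"
    and "\<forall>f\<in>F. \<exists>a. a \<notin> P \<and> a *s f \<in> N"
  shows "\<exists>u. u \<notin> P \<and> (\<forall>f\<in>F. u *s f \<in> N)"
  using assms(1,4)
proof (induction F rule: finite_induct)
  case empty
  then show ?case using assms(2) unfolding prime_ideal_def by auto
next
  case (insert x F)
  then obtain u where u: "u \<notin> P" "\<forall>f\<in>F. u *s f \<in> N" by auto
  obtain a where a: "a \<notin> P" "a *s x \<in> N" using insert.prems by auto
  have "\<forall>f\<in>insert x F. (u * a) *s f \<in> N"
    using subspace_scale[OF assms(3)] u(2) a(2)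
    by (metis insert_iff mult.commute scale_scale)
  then show ?case using prime_ideal_mult_notin[OF assms(2) u(1) a(1)] by blast
qed

text \<open>One row of the determinant trick: subtracting \<open>g c\<close> from the multiplier removes the
  \<open>x\<close>-component of the right-hand side.\<close>
lemma eliminate_generator:
  assumes "prime_ideal P" "g \<in> P" "u \<notin> P"
    and "u *s x = g *s y" "y \<in> span (insert x F)"
  obtains u' z where "u' \<notin> P" "z \<in> span F" "u' *s x = g *s z"
proof -
  obtain c where z: "y - c *s x \<in> span F" using assms(5) span_insert by auto
  have "g * c \<in> P"
    using assms(1,2) unfolding prime_ideal_def is_ideal_def by (metis mult.commute)
  then have "u - g * c \<notin> P" using prime_ideal_diff_notin assms(1,3) by blast
  moreover have "(u - g * c) *s x = g *s (y - c *s x)"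
    using assms(4) by (simp add: scale_left_diff_distrib scale_right_diff_distrib)
  ultimately show thesis using that z by blast
qed

lemma localized_nakayama:
  assumes "finite F" "prime_ideal P" "g \<in> P"
  shows "u \<notin> P \<Longrightarrow> \<forall>f\<in>F. \<exists>y\<in>span F. u *s f = g *s y
     \<Longrightarrow> \<exists>t. t \<notin> P \<and> (\<forall>f\<in>F. t *s f = 0)"
  using assms(1)
proof (induction F arbitrary: u rule: finite_induct)
  case empty
  then show ?case using assms(2) unfolding prime_ideal_def by auto
next
  case (insert x F u)
  obtain y where "y \<in> span (insert x F)" "u *s x = g *s y" using insert.prems by auto
  then obtain u' z where u': "u' \<notin> P" "z \<in> span F" "u' *s x = g *s z"
    using eliminate_generator[OF assms(2,3) insert.prems(1)] by blast
  have "\<forall>f\<in>F. \<exists>w\<in>span F. (u' * u) *s f = g *s w"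
  proof
    fix f assume "f \<in> F"
    then obtain y where y: "y \<in> span (insert x F)" "u *s f = g *s y" using insert.prems by auto
    then obtain d where "y - d *s x \<in> span F" using span_insert by auto
    then obtain w where w: "w \<in> span F" "y = d *s x + w" by (metis add.commute diff_add_cancel)
    have "(u' * u) *s f = u' *s (g *s y)" using y(2) by (metis scale_scale)
    also have "\<dots> = g *s (d *s (u' *s x) + u' *s w)" using w(2)
      by (simp add: scale_right_distrib mult.commute mult.left_commute)
    also have "\<dots> = g *s ((d * g) *s z + u' *s w)" using u'(3) by simp
    finally show "\<exists>w\<in>span F. (u' * u) *s f = g *s w"
      using w u'(2) by (meson span_add span_scale)
  qed
  then obtain t where t: "t \<notin> P" "\<forall>f\<in>F. t *s f = 0"
    using insert.IH prime_ideal_mult_notin[OF assms(2) u'(1) insert.prems(1)] by blast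
  have "(t * u') *s x = 0"
    using u'(3) scale_eq_zero_span[OF t(2) u'(2)] by (metis scale_left_commute scale_scale scale_zero_right)
  moreover have "\<forall>f\<in>F. (t * u') *s f = 0"
    using t(2) by (metis scale_left_commute scale_scale scale_zero_right)
  ultimately show ?case using prime_ideal_mult_notin[OF assms(2) t(1) u'(1)] by auto
qed

lemma annihilated_if_notin_supp_quot_principal:
  assumes F: "finite F" "span F = UNIV"
    and P: "prime_ideal P" "g \<in> P" "P \<notin> supp_quot scale UNIV (range (scale g))"
  shows "\<exists>t. t \<notin> P \<and> (\<forall>m. t *s m = 0)"
proof -
  have "\<forall>f\<in>F. \<exists>a. a \<notin> P \<and> a *s f \<in> range (scale g)"
    using P(1,3) unfolding supp_quot_def by auto
  then obtain u where u: "u \<notin> P" "\<forall>f\<in>F. u *s f \<in> range (scale g)"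
    using common_multiplier_into_subspace[OF F(1) P(1) subspace_range_scale] by blast
  then have "\<forall>f\<in>F. \<exists>y\<in>span F. u *s f = g *s y" using F(2) by auto
  then obtain t where "t \<notin> P" "\<forall>f\<in>F. t *s f = 0"
    using localized_nakayama[OF F(1) P(1,2) u(1)] by auto
  then show ?thesis using scale_eq_zero_span F(2) by blast
qed

lemma pseudo_null_torsion_by_principal:
  assumes F: "finite F" "span F = UNIV"
    and QgQ: "pseudo_null_quot scale UNIV (range (scale g))"
  shows "pseudo_null scale (torsion_by scale UNIV (ideal_gen {g}))"
  unfolding pseudo_null_def pseudo_null_quot_def
proof
  fix P assume "P \<in> supp_quot scale (torsion_by scale UNIV (ideal_gen {g})) {0}"
  then obtain m where P: "prime_ideal P" "\<forall>a\<in>ideal_gen {g}. a *s m = 0" "\<forall>a. a \<notin> P \<longrightarrow> a *s m \<noteq> 0"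
    unfolding supp_quot_def torsion_by_def by auto
  have "g \<in> P" using P(2,3) ideal_gen_singleton_self by blast
  show "height_ge P 2"
  proof (rule ccontr)
    assume "\<not> height_ge P 2"
    then have "P \<notin> supp_quot scale UNIV (range (scale g))"
      using QgQ unfolding pseudo_null_quot_def by auto
    then show False
      using annihilated_if_notin_supp_quot_principal[OF F P(1) \<open>g \<in> P\<close>] P(3) by blast
  qed
qed

end

theorem lemma3p3:
  fixes M :: "'r::comm_ring_1 set" and d p :: nat
    and s :: "'r fps \<Rightarrow> 'm::ab_group_add \<Rightarrow> 'm"
    and g :: "'r fps" and S :: "'m set"
  assumes R: "standing_R M d p" and d: "d \<ge> 1"
    and Q: "fin_gen_module s"
    and pr: "prime_ideal (ideal_gen {g})"
    and QpQ: "pseudo_null_quot s UNIV (ideal_smult s (ideal_gen {g}) UNIV)"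
    and S_sub: "module.subspace s S" and S_pn: "pseudo_null s S"
    and S_max: "\<forall>N. module.subspace s N \<and> pseudo_null s N \<longrightarrow> N \<subseteq> S"
  shows "torsion_by s UNIV (ideal_gen {g}) = torsion_by s S (ideal_gen {g})"
proof -
  interpret module s using Q unfolding fin_gen_module_def by auto
  obtain F where F: "finite F" "span F = UNIV" using Q unfolding fin_gen_module_def by auto
  have "subspace (torsion_by s UNIV (ideal_gen {g}))"
    using subspace_torsion_by subspace_UNIV by blast
  moreover have "pseudo_null s (torsion_by s UNIV (ideal_gen {g}))"
    using pseudo_null_torsion_by_principal[OF F] QpQ ideal_smult_principal_UNIV by simp
  ultimately have "torsion_by s UNIV (ideal_gen {g}) \<subseteq> S" using S_max by blast
  then show ?thesis unfolding torsion_by_def by auto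
qed

end
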